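(* Let $b,c\in Z^{10}$ with $\sum_i b_i=\sum_i c_i=0$, and assume $t\nmid B_i$, $t\nmid C_i$, $t\nmid B_i+B_{i+2}$ and $t\nmid C_i+C_{i+2}$ for all odd $i$ (indices mod $10$). Then $\mathbb{M}(b)\cong\mathbb{M}(c)$ as $B_{5,10}$-modules if and only if both $$t\mid C_1B_3(C_5+C_7)B_9-B_1C_3(B_5+B_7)C_9\quad\text{and}\quad t\mid C_1B_3C_5(B_7+B_9)-B_1C_3B_5(C_7+C_9).$$
   Context: Let $Z=\mathbb{C}[[t]]$. Let $\Gamma_{10}$ be the quiver with vertices $0,1,\dots,9$ (indices taken mod $10$) on a cycle and arrows $x_i\colon i-1\to i$, $y_i\colon i\to i-1$ for $i=1,\dots,10$. Let $B_{5,10}$ be the completed path algebra of $\Gamma_{10}$ modulo the closed ideal generated by $xy=yx$ and $x^5=y^5$ at every vertex. For $b=(b_1,\dots,b_{10})\in Z^{10}$ with $\sum_i b_i=0$, the $B_{5,10}$-module $\mathbb{M}(b)$ has $V_i=Z\oplus Z$ at every vertex, and for odd $j$: $x_j=\begin{pmatrix} t& b_j\\ 0&1\end{pmatrix}$, $y_j=\begin{pmatrix} 1&-b_j\\0&t\end{pmatrix}$; for even $j$: $x_j=\begin{pmatrix}1&b_j\\0&t\end{pmatrix}$, $y_j=\begin{pmatrix}t&-b_j\\0&1\end{pmatrix}$. An isomorphism $\mathbb{M}(b)\to\mathbb{M}(c)$ is a family of invertible $Z$-linear maps $\varphi_i\colon Z^2\to Z^2$ commuting with all $x_i$ and $y_i$.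 For odd $i$ write $B_i=b_i+b_{i+1}$ and $C_i=c_i+c_{i+1}$ (indices mod $10$). *)

theory Defs
  imports "HOL-Analysis.Analysis" "HOL-Computational_Algebra.Formal_Power_Series"
begin

text \<open>Z = C[[t]] is complex fps; t = fps_X. Z-linear maps Z^2 -> Z^2 are 2x2 matrices
  over Z acting on column vectors.  Vertices 0..9; arrows j = 1..10,
  x_j : (j-1) -> (j mod 10), y_j : (j mod 10) -> (j-1).  Sequences b are indexed by 1..10.\<close>

type_synonym Z = "complex fps"

definition mat2 :: "Z \<Rightarrow> Z \<Rightarrow> Z \<Rightarrow> Z \<Rightarrow> Z^2^2" where
  "mat2 a b c d = vector [vector [a, b], vector [c, d]]"

definition xmat :: "(nat \<Rightarrow> Z) \<Rightarrow> nat \<Rightarrow> Z^2^2" where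
  "xmat b j = (if odd j then mat2 fps_X (b j) 0 1 else mat2 1 (b j) 0 fps_X)"

definition ymat :: "(nat \<Rightarrow> Z) \<Rightarrow> nat \<Rightarrow> Z^2^2" where
  "ymat b j = (if odd j then mat2 1 (- b j) 0 fps_X else mat2 fps_X (- b j) 0 1)"

definition M_iso :: "(nat \<Rightarrow> Z) \<Rightarrow> (nat \<Rightarrow> Z) \<Rightarrow> bool" where
  "M_iso b c \<longleftrightarrow> (\<exists>\<phi> :: nat \<Rightarrow> Z^2^2.
      (\<forall>i<10. invertible (\<phi> i)) \<and>
      (\<forall>j\<in>{1..10}. \<phi> (j mod 10) ** xmat b j = xmat c j ** \<phi> (j - 1) \<and>
                    \<phi> (j - 1) ** ymat b j = ymat c j ** \<phi> (j mod 10)))"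

text \<open>B_i = b_i + b_{i+1} for odd i in 1..9 (no wraparound needed).\<close>
definition Bs :: "(nat \<Rightarrow> Z) \<Rightarrow> nat \<Rightarrow> Z" where
  "Bs b i = b i + b (i + 1)"

definition nxt :: "nat \<Rightarrow> nat" where
  "nxt i = (if i + 2 > 10 then i + 2 - 10 else i + 2)"

end

theory Submission
  imports Defs
begin

(* Since y_j = t x_j^-1, an isomorphism is a family phi_0, ..., phi_10 = phi_0 with
   phi_j x_j(b) = x_j(c) phi_(j-1) and phi_0 invertible (all phi_j then have the same determinant).
   Writing phi_0 = [[p, q], [t r, s]], these equations are solved around the cycle two arrows at a
   time: crossing the arrows 2k+1, 2k+2 is possible iff t divides C s' - B p' - B C r, where B, C are
   B_(2k+1), C_(2k+1) and p', s' are p, s shifted by r times partial sums of the C_i and B_i; the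
   frame closes up because the B_i and the C_i sum to 0.  Modulo t this is a homogeneous linear
   system in the constant terms of p, s, r whose fifth equation is minus the sum of the others.
   Under the nondegeneracy hypotheses it has a solution with p s nonzero iff two 3x3 minors vanish,
   and these are the two divisibility conditions. *)

lemma mat2_nth [simp]:
  "mat2 a b c d $ 1 $ 1 = a" "mat2 a b c d $ 1 $ 2 = b"
  "mat2 a b c d $ 2 $ 1 = c" "mat2 a b c d $ 2 $ 2 = d"
  by (simp_all add: mat2_def)

lemma mat2_cases:
  obtains a b c d where "A = mat2 a b c d"
proof
  show "A = mat2 (A$1$1) (A$1$2) (A$2$1) (A$2$2)"
    by (simp add: mat2_def vec_eq_iff forall_2)
qed

lemma mat2_eq_iff:
  "mat2 a b c d = mat2 a' b' c' d' \<longleftrightarrow> a = a' \<and> b = b' \<and> c = c' \<and> d = d'"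
  by (auto simp: mat2_def vec_eq_iff forall_2)

lemma mat2_mult:
  "mat2 a b c d ** mat2 e f g h = mat2 (a * e + b * g) (a * f + b * h) (c * e + d * g) (c * f + d * h)"
  by (simp add: mat2_def vec_eq_iff forall_2 matrix_matrix_mult_def sum_2)

lemma mat_eq_mat2: "(mat a :: Z^2^2) = mat2 a 0 0 a"
  by (simp add: mat2_def vec_eq_iff forall_2 mat_def)

lemma det_mat2: "det (mat2 a b c d) = a * d - b * c"
  by (simp add: det_2)

lemma fps_X_dvd_iff: "fps_X dvd f \<longleftrightarrow> fps_nth f 0 = (0 :: 'a::comm_ring_1)"
proof
  assume "fps_X dvd f"
  then show "fps_nth f 0 = 0" by auto
next
  assume "fps_nth f 0 = 0"
  then have "f = fps_X * fps_shift 1 f" by (intro fps_ext) simp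
  then show "fps_X dvd f" by (metis dvd_triv_left)
qed

lemma fps_X_mult_eq_iff:
  "fps_X * u = f \<longleftrightarrow> fps_X dvd f \<and> u = fps_shift 1 (f :: 'a::comm_ring_1 fps)"
proof
  assume "fps_X * u = f"
  then show "fps_X dvd f \<and> u = fps_shift 1 f"
    by (metis dvd_triv_left fps_shift_times_fps_X' mult.commute)
next
  assume "fps_X dvd f \<and> u = fps_shift 1 f"
  then obtain g where "f = fps_X * g" "u = fps_shift 1 f" by auto
  then show "fps_X * u = f" by (metis fps_shift_times_fps_X' mult.commute)
qed

lemma invertible_mat2_iff: "invertible A \<longleftrightarrow> fps_nth (det A) 0 \<noteq> 0" for A :: "Z^2^2"
proof
  assume "invertible A"
  then obtain A' where "A ** A' = mat 1" unfolding invertible_def by blast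
  then have "det A * det A' = 1" by (metis det_mul det_I)
  then show "fps_nth (det A) 0 \<noteq> 0" by (metis fps_mult_nth_0 fps_one_nth mult_zero_left zero_neq_one)
next
  assume nz: "fps_nth (det A) 0 \<noteq> 0"
  obtain a b c d where A: "A = mat2 a b c d" by (rule mat2_cases)
  define e where "e = inverse (a * d - b * c)"
  have e: "(a * d - b * c) * e = 1" using nz unfolding e_def A det_mat2 by (rule inverse_mult_eq_1')
  show "invertible A" unfolding invertible_def A
    by (rule exI[of _ "mat2 (d * e) (- b * e) (- c * e) (a * e)"])
       (use e in \<open>simp add: mat2_mult mat_eq_mat2 mat2_eq_iff algebra_simps\<close>)
qed

lemma odd_arrow_iff:
  "A ** mat2 fps_X b 0 1 = mat2 fps_X c 0 1 ** mat2 p q R s \<longleftrightarrow>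
   (\<exists>r. R = fps_X * r \<and>
        A = mat2 (p + c * r) (fps_X * q + c * s - (p + c * r) * b) r (s - b * r))"
proof -
  obtain a11 a12 a21 a22 where A: "A = mat2 a11 a12 a21 a22" by (rule mat2_cases)
  have "a11 * fps_X = fps_X * p + c * (fps_X * a21) \<longleftrightarrow> fps_X * a11 = fps_X * (p + c * a21)"
    by (simp add: algebra_simps)
  also have "\<dots> \<longleftrightarrow> a11 = p + c * a21"
    unfolding mult_cancel_left by simp
  finally show ?thesis
    unfolding A mat2_mult mat2_eq_iff by (auto simp: algebra_simps)
qed

lemma even_arrow_iff:
  "F ** mat2 1 b 0 fps_X = mat2 1 c 0 fps_X ** mat2 P Q r S \<longleftrightarrow>
   (\<exists>u. fps_X * u = Q + c * S - (P + c * r) * b \<and> F = mat2 (P + c * r) u (fps_X * r) (S - b * r))"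
proof -
  obtain f11 f12 f21 f22 where F: "F = mat2 f11 f12 f21 f22" by (rule mat2_cases)
  have "fps_X * r * b + f22 * fps_X = fps_X * S \<longleftrightarrow> fps_X * (f22 + b * r) = fps_X * S"
    by (simp add: algebra_simps)
  also have "\<dots> \<longleftrightarrow> f22 = S - b * r"
    unfolding mult_cancel_left by (auto simp: algebra_simps)
  finally show ?thesis
    unfolding F mat2_mult mat2_eq_iff by (auto simp: algebra_simps)
qed

definition pair_defect :: "'a::comm_ring \<Rightarrow> 'a \<Rightarrow> 'a \<Rightarrow> 'a \<Rightarrow> 'a \<Rightarrow> 'a" where
  "pair_defect \<beta> \<gamma> p s r = \<gamma> * s - \<beta> * p - \<beta> * \<gamma> * r"

lemma pair_arrows_iff:
  "A ** mat2 fps_X b 0 1 = mat2 fps_X c 0 1 ** mat2 p q (fps_X * r) s \<and>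
   F ** mat2 1 b' 0 fps_X = mat2 1 c' 0 fps_X ** A \<longleftrightarrow>
   A = mat2 (p + c * r) (fps_X * q + c * s - (p + c * r) * b) r (s - b * r) \<and>
   (\<exists>u. fps_X * u = pair_defect (b + b') (c + c') p s r \<and>
        F = mat2 (p + (c + c') * r) (q + u) (fps_X * r) (s - (b + b') * r))"
proof -
  have odd: "A ** mat2 fps_X b 0 1 = mat2 fps_X c 0 1 ** mat2 p q (fps_X * r) s \<longleftrightarrow>
      A = mat2 (p + c * r) (fps_X * q + c * s - (p + c * r) * b) r (s - b * r)"
    unfolding odd_arrow_iff by auto
  have shift: "(\<exists>u'. fps_X * u' = fps_X * q + d \<and> F = G u') \<longleftrightarrow>
      (\<exists>u. fps_X * u = d \<and> F = G (q + u))" for d G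
  proof
    assume "\<exists>u'. fps_X * u' = fps_X * q + d \<and> F = G u'"
    then obtain u' where "fps_X * u' = fps_X * q + d" "F = G u'" by blast
    then show "\<exists>u. fps_X * u = d \<and> F = G (q + u)"
      by (intro exI[of _ "u' - q"]) (simp add: right_diff_distrib)
  next
    assume "\<exists>u. fps_X * u = d \<and> F = G (q + u)"
    then obtain u where "fps_X * u = d" "F = G (q + u)" by blast
    then show "\<exists>u'. fps_X * u' = fps_X * q + d \<and> F = G u'"
      by (intro exI[of _ "q + u"]) (simp add: distrib_left)
  qed
  have corner: "fps_X * q + c * s - (p + c * r) * b + c' * (s - b * r) - (p + c * r + c' * r) * b'
      = fps_X * q + pair_defect (b + b') (c + c') p s r"
    by (simp add: pair_defect_def algebra_simps)
  have diag: "p + c * r + c' * r = p + (c + c') * r" "s - b * r - b' * r = s - (b + b') * r"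
    by (simp_all add: algebra_simps)
  have even: "F ** mat2 1 b' 0 fps_X = mat2 1 c' 0 fps_X **
        mat2 (p + c * r) (fps_X * q + c * s - (p + c * r) * b) r (s - b * r) \<longleftrightarrow>
      (\<exists>u. fps_X * u = pair_defect (b + b') (c + c') p s r \<and>
        F = mat2 (p + (c + c') * r) (q + u) (fps_X * r) (s - (b + b') * r))"
    unfolding even_arrow_iff corner unfolding diag shift ..
  show ?thesis
    unfolding odd using even by blast
qed

lemma xmat_ymat_eq: "xmat b j ** ymat b j = mat fps_X" "ymat b j ** xmat b j = mat fps_X"
  by (simp_all add: xmat_def ymat_def mat2_mult mat_eq_mat2 algebra_simps)

lemma det_xmat: "det (xmat b j) = fps_X"
  by (simp add: xmat_def det_mat2)

lemma matrix_mul_mat_commute: "M ** mat a = mat a ** (M :: 'a::comm_semiring_1^'n^'n)"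
  by (simp add: matrix_matrix_mult_def mat_def vec_eq_iff if_distrib if_distribR mult.commute cong: if_cong)

lemma mat_matrix_mul_left_cancel:
  assumes "mat a ** M = mat a ** (N :: 'a::idom^'n^'m)" "a \<noteq> 0"
  shows "M = N"
proof -
  have "(mat a ** M) $ i $ j = a * M $ i $ j" for M :: "'a^'n^'m" and i j
    by (simp add: matrix_matrix_mult_def mat_def if_distrib if_distribR cong: if_cong)
  with assms show ?thesis by (simp add: vec_eq_iff)
qed

lemma ymat_intertwines_if_xmat_intertwines:
  assumes "\<psi>' ** xmat b j = xmat c j ** \<psi>"
  shows "\<psi> ** ymat b j = ymat c j ** \<psi>'"
proof (rule mat_matrix_mul_left_cancel)
  have "mat fps_X ** (\<psi> ** ymat b j) = ymat c j ** (xmat c j ** \<psi>) ** ymat b j"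
    by (simp add: matrix_mul_assoc xmat_ymat_eq)
  also have "\<dots> = ymat c j ** \<psi>' ** (xmat b j ** ymat b j)"
    by (simp only: assms[symmetric] matrix_mul_assoc)
  also have "\<dots> = mat fps_X ** (ymat c j ** \<psi>')"
    by (simp add: xmat_ymat_eq matrix_mul_mat_commute)
  finally show "mat fps_X ** (\<psi> ** ymat b j) = mat fps_X ** (ymat c j ** \<psi>')" .
qed simp

lemma det_eq_if_xmat_intertwines:
  assumes "\<psi>' ** xmat b j = xmat c j ** \<psi>"
  shows "det \<psi>' = det \<psi>"
  using arg_cong[OF assms, of det] by (simp add: det_mul det_xmat mult.commute)

lemma M_iso_iff_xmat_cycle:
  "M_iso b c \<longleftrightarrow> (\<exists>\<psi>. invertible (\<psi> 0) \<and> \<psi> 10 = \<psi> 0 \<and>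
     (\<forall>j\<in>{1..10}. \<psi> j ** xmat b j = xmat c j ** \<psi> (j - 1)))"
proof
  assume "M_iso b c"
  then obtain \<phi> where inv: "\<forall>i<10. invertible (\<phi> i)"
    and x: "\<forall>j\<in>{1..10}. \<phi> (j mod 10) ** xmat b j = xmat c j ** \<phi> (j - 1)"
    unfolding M_iso_def by blast
  define \<psi> where "\<psi> v = \<phi> (v mod 10)" for v
  have "\<psi> j ** xmat b j = xmat c j ** \<psi> (j - 1)" if "j \<in> {1..10}" for j
    using x that by (auto simp: \<psi>_def)
  then show "\<exists>\<psi>. invertible (\<psi> 0) \<and> \<psi> 10 = \<psi> 0 \<and>
      (\<forall>j\<in>{1..10}. \<psi> j ** xmat b j = xmat c j ** \<psi> (j - 1))"
    using inv by (intro exI[of _ \<psi>]) (auto simp: \<psi>_def)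
next
  assume "\<exists>\<psi>. invertible (\<psi> 0) \<and> \<psi> 10 = \<psi> 0 \<and>
      (\<forall>j\<in>{1..10}. \<psi> j ** xmat b j = xmat c j ** \<psi> (j - 1))"
  then obtain \<psi> where inv: "invertible (\<psi> 0)" and closed: "\<psi> 10 = \<psi> 0"
    and x: "\<forall>j\<in>{1..10}. \<psi> j ** xmat b j = xmat c j ** \<psi> (j - 1)" by blast
  have det: "det (\<psi> v) = det (\<psi> 0)" if "v \<le> 10" for v
    using that
  proof (induction v)
    case (Suc v)
    then show ?case
      using det_eq_if_xmat_intertwines[of "\<psi> (Suc v)" b "Suc v" c "\<psi> v"] x by auto
  qed simp
  have x_mod: "\<psi> (j mod 10) ** xmat b j = xmat c j ** \<psi> (j - 1)" if "j \<in> {1..10}" for j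
  proof (cases "j = 10")
    case False
    with that have "j mod 10 = j" by simp
    with x that show ?thesis by simp
  next
    case True
    then show ?thesis using x[rule_format, of 10] closed by simp
  qed
  show "M_iso b c"
    unfolding M_iso_def
  proof (intro exI[of _ \<psi>] conjI allI impI ballI)
    fix i :: nat
    assume "i < 10"
    then show "invertible (\<psi> i)"
      using inv det[of i] by (simp add: invertible_mat2_iff)
  next
    fix j :: nat
    assume "j \<in> {1..10}"
    then show "\<psi> (j mod 10) ** xmat b j = xmat c j ** \<psi> (j - 1)"
      and "\<psi> (j - 1) ** ymat b j = ymat c j ** \<psi> (j mod 10)"
      by (simp_all add: x_mod ymat_intertwines_if_xmat_intertwines)
  qed
qed

lemma xmat_odd: "xmat b (2 * k + 1) = mat2 fps_X (b (2 * k + 1)) 0 1"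
  and xmat_even: "xmat b (2 * k + 2) = mat2 1 (b (2 * k + 2)) 0 fps_X"
  by (simp_all add: xmat_def)

lemma sum_pair_defects:
  fixes \<beta> \<gamma> :: "nat \<Rightarrow> 'a::comm_ring"
  shows "(\<Sum>i<k. pair_defect (\<beta> i) (\<gamma> i) (p + (\<Sum>l<i. \<gamma> l) * r) (s - (\<Sum>l<i. \<beta> l) * r) r)
    = (\<Sum>i<k. \<gamma> i) * s - (\<Sum>i<k. \<beta> i) * p - (\<Sum>i<k. \<beta> i) * (\<Sum>i<k. \<gamma> i) * r"
  by (induction k) (simp_all add: pair_defect_def algebra_simps)

lemma sum_Bs_pairs: "(\<Sum>i<k. Bs f (2 * i + 1)) = (\<Sum>i=1..2 * k. f i)"
  by (induction k) (simp_all add: Bs_def sum.cl_ivl_Suc)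

context
  fixes b c :: "nat \<Rightarrow> Z" and p q r s :: Z
begin

definition chain_p :: "nat \<Rightarrow> Z" where
  "chain_p k = p + (\<Sum>i<k. Bs c (2 * i + 1)) * r"

definition chain_s :: "nat \<Rightarrow> Z" where
  "chain_s k = s - (\<Sum>i<k. Bs b (2 * i + 1)) * r"

definition chain_defect :: "nat \<Rightarrow> Z" where
  "chain_defect k = pair_defect (Bs b (2 * k + 1)) (Bs c (2 * k + 1)) (chain_p k) (chain_s k) r"

definition chain_q :: "nat \<Rightarrow> Z" where
  "chain_q k = q + fps_shift 1 (\<Sum>i<k. chain_defect i)"

definition chain_frame :: "nat \<Rightarrow> Z^2^2" where
  "chain_frame v = (let k = v div 2 in
     if even v then mat2 (chain_p k) (chain_q k) (fps_X * r) (chain_s k)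
     else mat2 (chain_p k + c v * r) (fps_X * chain_q k + c v * chain_s k - (chain_p k + c v * r) * b v)
            r (chain_s k - b v * r))"

lemma chain_frame_0: "chain_frame 0 = mat2 p q (fps_X * r) s"
  by (simp add: chain_frame_def chain_p_def chain_s_def chain_q_def)

lemma chain_frame_even: "chain_frame (2 * k) = mat2 (chain_p k) (chain_q k) (fps_X * r) (chain_s k)"
  and chain_frame_odd: "chain_frame (2 * k + 1) =
    mat2 (chain_p k + c (2 * k + 1) * r)
      (fps_X * chain_q k + c (2 * k + 1) * chain_s k - (chain_p k + c (2 * k + 1) * r) * b (2 * k + 1))
      r (chain_s k - b (2 * k + 1) * r)"
  by (simp_all add: chain_frame_def)

lemma chain_frame_Suc_even:
  "chain_frame (2 * k + 2) = mat2 (chain_p k + Bs c (2 * k + 1) * r)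
     (chain_q k + fps_shift 1 (chain_defect k)) (fps_X * r) (chain_s k - Bs b (2 * k + 1) * r)"
proof -
  have "chain_frame (2 * k + 2) = chain_frame (2 * Suc k)" by simp
  also have "\<dots> = mat2 (chain_p (Suc k)) (chain_q (Suc k)) (fps_X * r) (chain_s (Suc k))"
    by (rule chain_frame_even)
  finally show ?thesis
    by (simp add: chain_p_def chain_s_def chain_q_def fps_shift_add algebra_simps)
qed

lemma chain_step_iff:
  assumes "\<psi> (2 * k) = chain_frame (2 * k)"
  shows "\<psi> (2 * k + 1) ** xmat b (2 * k + 1) = xmat c (2 * k + 1) ** \<psi> (2 * k) \<and>
      \<psi> (2 * k + 2) ** xmat b (2 * k + 2) = xmat c (2 * k + 2) ** \<psi> (2 * k + 1) \<longleftrightarrow>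
    fps_X dvd chain_defect k \<and> \<psi> (2 * k + 1) = chain_frame (2 * k + 1) \<and>
      \<psi> (2 * k + 2) = chain_frame (2 * k + 2)"
  unfolding assms xmat_odd xmat_even chain_frame_even chain_frame_odd chain_frame_Suc_even
    pair_arrows_iff fps_X_mult_eq_iff
  by (auto simp: chain_defect_def Bs_def)

lemma xmat_chain_iff:
  assumes "\<psi> 0 = mat2 p q (fps_X * r) s"
  shows "(\<forall>j\<in>{1..2 * k}. \<psi> j ** xmat b j = xmat c j ** \<psi> (j - 1)) \<longleftrightarrow>
    (\<forall>i<k. fps_X dvd chain_defect i) \<and> (\<forall>v\<le>2 * k. \<psi> v = chain_frame v)"
proof (induction k)
  case 0
  show ?case
    using assms by (simp add: chain_frame_0)
next
  case (Suc k)
  have split_x: "(\<forall>j\<in>{1..2 * Suc k}. P j) \<longleftrightarrow> (\<forall>j\<in>{1..2 * k}. P j) \<and> P (2 * k + 1) \<and> P (2 * k + 2)"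
    for P :: "nat \<Rightarrow> bool"
  proof -
    have "{1..2 * Suc k} = insert (2 * k + 2) (insert (2 * k + 1) {1..2 * k})" by auto
    then show ?thesis by auto
  qed
  have split_v: "(\<forall>v\<le>2 * Suc k. P v) \<longleftrightarrow> (\<forall>v\<le>2 * k. P v) \<and> P (2 * k + 1) \<and> P (2 * k + 2)"
    for P :: "nat \<Rightarrow> bool"
    by (auto simp: le_Suc_eq)
  let ?step = "\<psi> (2 * k + 1) ** xmat b (2 * k + 1) = xmat c (2 * k + 1) ** \<psi> (2 * k) \<and>
      \<psi> (2 * k + 2) ** xmat b (2 * k + 2) = xmat c (2 * k + 2) ** \<psi> (2 * k + 1)"
  have "(\<forall>j\<in>{1..2 * Suc k}. \<psi> j ** xmat b j = xmat c j ** \<psi> (j - 1)) \<longleftrightarrow>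
      ((\<forall>i<k. fps_X dvd chain_defect i) \<and> (\<forall>v\<le>2 * k. \<psi> v = chain_frame v)) \<and> ?step"
    unfolding split_x Suc.IH by simp
  also have "\<dots> \<longleftrightarrow> ((\<forall>i<k. fps_X dvd chain_defect i) \<and> (\<forall>v\<le>2 * k. \<psi> v = chain_frame v)) \<and>
      fps_X dvd chain_defect k \<and> \<psi> (2 * k + 1) = chain_frame (2 * k + 1) \<and>
      \<psi> (2 * k + 2) = chain_frame (2 * k + 2)"
    by (rule conj_cong[OF refl chain_step_iff]) simp
  also have "\<dots> \<longleftrightarrow> (\<forall>i<Suc k. fps_X dvd chain_defect i) \<and> (\<forall>v\<le>2 * Suc k. \<psi> v = chain_frame v)"
    unfolding split_v by (auto simp: less_Suc_eq)
  finally show ?case .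
qed

lemma chain_frame_closed:
  assumes "(\<Sum>i<k. Bs b (2 * i + 1)) = 0" and "(\<Sum>i<k. Bs c (2 * i + 1)) = 0"
  shows "chain_frame (2 * k) = chain_frame 0"
proof -
  have "(\<Sum>i<k. chain_defect i) = 0"
    unfolding chain_defect_def chain_p_def chain_s_def sum_pair_defects assms by simp
  then show ?thesis
    using assms by (simp add: chain_frame_0 chain_frame_even chain_p_def chain_s_def chain_q_def)
qed

lemma chain_defect_nth_0:
  "fps_nth (chain_defect k) 0 =
    pair_defect (fps_nth (Bs b (2 * k + 1)) 0) (fps_nth (Bs c (2 * k + 1)) 0)
      (fps_nth p 0 + (\<Sum>i<k. fps_nth (Bs c (2 * i + 1)) 0) * fps_nth r 0)
      (fps_nth s 0 - (\<Sum>i<k. fps_nth (Bs b (2 * i + 1)) 0) * fps_nth r 0) (fps_nth r 0)"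
  by (simp add: chain_defect_def chain_p_def chain_s_def pair_defect_def fps_sum_nth)

end

definition pair_defects_solvable :: "nat \<Rightarrow> (nat \<Rightarrow> 'a::comm_ring) \<Rightarrow> (nat \<Rightarrow> 'a) \<Rightarrow> bool" where
  "pair_defects_solvable n \<beta> \<gamma> \<longleftrightarrow> (\<exists>p s r. p * s \<noteq> 0 \<and>
     (\<forall>i<n. pair_defect (\<beta> i) (\<gamma> i) (p + (\<Sum>l<i. \<gamma> l) * r) (s - (\<Sum>l<i. \<beta> l) * r) r = 0))"

lemma det3_eq_0_if_kernel_nonzero:
  fixes a1 a2 a3 b1 b2 b3 c1 c2 c3 w1 w2 w3 :: "'a::idom"
  assumes "a1 * w1 + a2 * w2 + a3 * w3 = 0" "b1 * w1 + b2 * w2 + b3 * w3 = 0"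
    "c1 * w1 + c2 * w2 + c3 * w3 = 0" "w1 \<noteq> 0"
  shows "a1 * (b2 * c3 - b3 * c2) - a2 * (b1 * c3 - b3 * c1) + a3 * (b1 * c2 - b2 * c1) = 0"
proof -
  have "(a1 * (b2 * c3 - b3 * c2) - a2 * (b1 * c3 - b3 * c1) + a3 * (b1 * c2 - b2 * c1)) * w1
      = (a1 * w1 + a2 * w2 + a3 * w3) * (b2 * c3 - b3 * c2)
        + (b1 * w1 + b2 * w2 + b3 * w3) * (c2 * a3 - c3 * a2)
        + (c1 * w1 + c2 * w2 + c3 * w3) * (a2 * b3 - a3 * b2)"
    by (simp add: algebra_simps)
  with assms show ?thesis by simp
qed

lemma pair_defects_vanish_iff_all_but_last:
  fixes \<beta> \<gamma> :: "nat \<Rightarrow> 'a::comm_ring"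
  assumes "(\<Sum>i<Suc m. \<beta> i) = 0" and "(\<Sum>i<Suc m. \<gamma> i) = 0"
  shows "(\<forall>i<Suc m. pair_defect (\<beta> i) (\<gamma> i) (p + (\<Sum>l<i. \<gamma> l) * r) (s - (\<Sum>l<i. \<beta> l) * r) r = 0)
    \<longleftrightarrow> (\<forall>i<m. pair_defect (\<beta> i) (\<gamma> i) (p + (\<Sum>l<i. \<gamma> l) * r) (s - (\<Sum>l<i. \<beta> l) * r) r = 0)"
    (is "(\<forall>i<Suc m. ?D i = 0) \<longleftrightarrow> (\<forall>i<m. ?D i = 0)")
proof -
  have "(\<Sum>i<m. ?D i) + ?D m = 0"
    using sum_pair_defects[where \<beta>=\<beta> and \<gamma>=\<gamma> and p=p and r=r and s=s and k="Suc m"] assms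
    by simp
  then show ?thesis
    by (auto simp: All_less_Suc)
qed

lemma five_pair_defects_solvable_iff:
  fixes \<beta> \<gamma> :: "nat \<Rightarrow> 'a::idom"
  assumes sum_\<beta>: "(\<Sum>i<5. \<beta> i) = 0" and sum_\<gamma>: "(\<Sum>i<5. \<gamma> i) = 0"
    and nonzero: "\<beta> 0 \<noteq> 0" "\<beta> 1 \<noteq> 0" "\<beta> 0 + \<beta> 1 \<noteq> 0"
      "\<gamma> 0 \<noteq> 0" "\<gamma> 1 \<noteq> 0" "\<gamma> 0 + \<gamma> 1 \<noteq> 0"
  shows "pair_defects_solvable 5 \<beta> \<gamma> \<longleftrightarrow>
    \<gamma> 0 * \<beta> 1 * (\<gamma> 2 + \<gamma> 3) * \<beta> 4 - \<beta> 0 * \<gamma> 1 * (\<beta> 2 + \<beta> 3) * \<gamma> 4 = 0 \<and>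
    \<gamma> 0 * \<beta> 1 * \<gamma> 2 * (\<beta> 3 + \<beta> 4) - \<beta> 0 * \<gamma> 1 * \<beta> 2 * (\<gamma> 3 + \<gamma> 4) = 0"
    (is "_ \<longleftrightarrow> ?P1 = 0 \<and> ?P2 = 0")
proof -
  define D where "D p s r i = pair_defect (\<beta> i) (\<gamma> i) (p + (\<Sum>l<i. \<gamma> l) * r) (s - (\<Sum>l<i. \<beta> l) * r) r"
    for p s r i
  have first_four: "(\<forall>i<5. D p s r i = 0) \<longleftrightarrow>
      D p s r 0 = 0 \<and> D p s r 1 = 0 \<and> D p s r 2 = 0 \<and> D p s r 3 = 0" for p s r
    using pair_defects_vanish_iff_all_but_last[where m=4 and \<beta>=\<beta> and \<gamma>=\<gamma> and p=p and r=r and s=s] sum_\<beta> sum_\<gamma>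
    by (simp add: D_def eval_nat_numeral All_less_Suc conj_ac)
  have last_term: "f 4 = (\<Sum>i<5. f i) - (f 0 + f 1 + f 2 + f 3)" for f :: "nat \<Rightarrow> 'a"
    by (simp add: eval_nat_numeral algebra_simps)
  have \<beta>4: "\<beta> 4 = - (\<beta> 0 + \<beta> 1 + \<beta> 2 + \<beta> 3)" and \<gamma>4: "\<gamma> 4 = - (\<gamma> 0 + \<gamma> 1 + \<gamma> 2 + \<gamma> 3)"
    using last_term[of \<beta>] last_term[of \<gamma>] sum_\<beta> sum_\<gamma> by simp_all
  define \<kappa> where "\<kappa> i = \<gamma> i * (\<Sum>l<i. \<beta> l) + \<beta> i * (\<Sum>l<i. \<gamma> l) + \<beta> i * \<gamma> i" for i
  have linear: "D p s r i = \<gamma> i * s + (- \<beta> i) * p + (- \<kappa> i) * r" for p s r i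
    by (simp add: D_def pair_defect_def \<kappa>_def algebra_simps)
  have \<kappa>_values: "\<kappa> 0 = \<beta> 0 * \<gamma> 0" "\<kappa> 1 = \<gamma> 1 * \<beta> 0 + \<beta> 1 * \<gamma> 0 + \<beta> 1 * \<gamma> 1"
    "\<kappa> 2 = \<gamma> 2 * (\<beta> 0 + \<beta> 1) + \<beta> 2 * (\<gamma> 0 + \<gamma> 1) + \<beta> 2 * \<gamma> 2"
    "\<kappa> 3 = \<gamma> 3 * (\<beta> 0 + \<beta> 1 + \<beta> 2) + \<beta> 3 * (\<gamma> 0 + \<gamma> 1 + \<gamma> 2) + \<beta> 3 * \<gamma> 3"
    by (simp_all add: \<kappa>_def eval_nat_numeral)
  show ?thesis
    unfolding pair_defects_solvable_def D_def[symmetric] first_four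
  proof
    assume "\<exists>p s r. p * s \<noteq> 0 \<and> D p s r 0 = 0 \<and> D p s r 1 = 0 \<and> D p s r 2 = 0 \<and> D p s r 3 = 0"
    then obtain p s r where "s \<noteq> 0"
      and eqs: "D p s r 0 = 0" "D p s r 1 = 0" "D p s r 2 = 0" "D p s r 3 = 0"
      by auto
    note eqs = eqs[unfolded linear]
    have "?P2 = 0"
      using det3_eq_0_if_kernel_nonzero[OF eqs(1) eqs(2) eqs(3) \<open>s \<noteq> 0\<close>]
      unfolding \<kappa>_values \<beta>4 \<gamma>4 by (simp add: algebra_simps)
    moreover have "?P2 - ?P1 = 0"
      using det3_eq_0_if_kernel_nonzero[OF eqs(1) eqs(2) eqs(4) \<open>s \<noteq> 0\<close>]
      unfolding \<kappa>_values \<beta>4 \<gamma>4 by (simp add: algebra_simps)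
    ultimately show "?P1 = 0 \<and> ?P2 = 0" by simp
  next
    assume P: "?P1 = 0 \<and> ?P2 = 0"
    \<comment> \<open>the cross product of the coefficient vectors of the first two equations\<close>
    define p where "p = \<gamma> 0 * \<beta> 1 * (\<gamma> 0 + \<gamma> 1)"
    define s where "s = \<beta> 0 * \<gamma> 1 * (\<beta> 0 + \<beta> 1)"
    define r where "r = \<gamma> 1 * \<beta> 0 - \<beta> 1 * \<gamma> 0"
    have "D p s r 0 = 0" "D p s r 1 = 0" "D p s r 2 = - ?P2" "D p s r 3 = ?P2 - ?P1"
      unfolding linear \<kappa>_values p_def s_def r_def \<beta>4 \<gamma>4 by (simp_all add: algebra_simps)
    moreover have "p * s \<noteq> 0"
      using nonzero by (simp add: p_def s_def)
    ultimately show "\<exists>p s r. p * s \<noteq> 0 \<and> D p s r 0 = 0 \<and> D p s r 1 = 0 \<and> D p s r 2 = 0 \<and> D p s r 3 = 0"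
      using P by auto
  qed
qed

lemma M_iso_iff_pair_defects_solvable:
  assumes "(\<Sum>i=1..10. b i) = 0" and "(\<Sum>i=1..10. c i) = 0"
  shows "M_iso b c \<longleftrightarrow>
    pair_defects_solvable 5 (\<lambda>i. fps_nth (Bs b (2 * i + 1)) 0) (\<lambda>i. fps_nth (Bs c (2 * i + 1)) 0)"
    (is "_ \<longleftrightarrow> pair_defects_solvable 5 ?\<beta> ?\<gamma>")
proof
  assume "M_iso b c"
  then obtain \<psi> where inv: "invertible (\<psi> 0)"
    and x: "\<forall>j\<in>{1..2 * 5}. \<psi> j ** xmat b j = xmat c j ** \<psi> (j - 1)"
    unfolding M_iso_iff_xmat_cycle by auto
  obtain p q R s where \<psi>0: "\<psi> 0 = mat2 p q R s" by (rule mat2_cases)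
  have "\<psi> 1 ** mat2 fps_X (b 1) 0 1 = mat2 fps_X (c 1) 0 1 ** mat2 p q R s"
    using x[rule_format, of 1] \<psi>0 by (simp add: xmat_def)
  then obtain r where R: "R = fps_X * r" unfolding odd_arrow_iff by blast
  with \<psi>0 x have "\<forall>i<5. fps_X dvd chain_defect b c p r s i"
    using xmat_chain_iff[where k=5] by auto
  moreover have "fps_nth p 0 * fps_nth s 0 \<noteq> 0"
    using inv \<psi>0 R by (simp add: invertible_mat2_iff det_mat2)
  ultimately show "pair_defects_solvable 5 ?\<beta> ?\<gamma>"
    unfolding pair_defects_solvable_def
    by (intro exI[of _ "fps_nth p 0"] exI[of _ "fps_nth s 0"] exI[of _ "fps_nth r 0"])
      (simp add: fps_X_dvd_iff chain_defect_nth_0)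
next
  assume "pair_defects_solvable 5 ?\<beta> ?\<gamma>"
  then obtain p s r where ps: "p * s \<noteq> 0" and defects: "\<forall>i<5. pair_defect (?\<beta> i) (?\<gamma> i)
      (p + (\<Sum>l<i. ?\<gamma> l) * r) (s - (\<Sum>l<i. ?\<beta> l) * r) r = 0"
    unfolding pair_defects_solvable_def by blast
  define \<psi> where "\<psi> = chain_frame b c (fps_const p) 0 (fps_const r) (fps_const s)"
  have \<psi>0: "\<psi> 0 = mat2 (fps_const p) 0 (fps_X * fps_const r) (fps_const s)"
    by (simp add: \<psi>_def chain_frame_0)
  have "\<forall>i<5. fps_X dvd chain_defect b c (fps_const p) (fps_const r) (fps_const s) i"
    using defects by (simp add: fps_X_dvd_iff chain_defect_nth_0)
  then have x: "\<forall>j\<in>{1..2 * 5}. \<psi> j ** xmat b j = xmat c j ** \<psi> (j - 1)"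
    using xmat_chain_iff[where \<psi>=\<psi> and k=5, OF \<psi>0] by (simp add: \<psi>_def)
  have "(\<Sum>i<5. Bs b (2 * i + 1)) = 0" "(\<Sum>i<5. Bs c (2 * i + 1)) = 0"
    using assms unfolding sum_Bs_pairs by simp_all
  then have "\<psi> (2 * 5) = \<psi> 0"
    unfolding \<psi>_def by (rule chain_frame_closed)
  moreover have "invertible (\<psi> 0)"
    using ps by (simp add: \<psi>0 invertible_mat2_iff det_mat2)
  ultimately show "M_iso b c"
    unfolding M_iso_iff_xmat_cycle using x by auto
qed

theorem theorem2p10:
  fixes b c :: "nat \<Rightarrow> complex fps"
  assumes "(\<Sum>i=1..10. b i) = 0" and "(\<Sum>i=1..10. c i) = 0"
    and "\<forall>i\<in>{1,3,5,7,9}. \<not> fps_X dvd Bs b i \<and> \<not> fps_X dvd Bs c i \<and>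
           \<not> fps_X dvd (Bs b i + Bs b (nxt i)) \<and> \<not> fps_X dvd (Bs c i + Bs c (nxt i))"
  shows "M_iso b c \<longleftrightarrow>
    (fps_X dvd (Bs c 1 * Bs b 3 * (Bs c 5 + Bs c 7) * Bs b 9
                - Bs b 1 * Bs c 3 * (Bs b 5 + Bs b 7) * Bs c 9) \<and>
     fps_X dvd (Bs c 1 * Bs b 3 * Bs c 5 * (Bs b 7 + Bs b 9)
                - Bs b 1 * Bs c 3 * Bs b 5 * (Bs c 7 + Bs c 9)))"
proof -
  define \<beta> where "\<beta> = (\<lambda>i. fps_nth (Bs b (2 * i + 1)) 0)"
  define \<gamma> where "\<gamma> = (\<lambda>i. fps_nth (Bs c (2 * i + 1)) 0)"
  have "(\<Sum>i<5. \<beta> i) = fps_nth (\<Sum>i<5. Bs b (2 * i + 1)) 0"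
    and "(\<Sum>i<5. \<gamma> i) = fps_nth (\<Sum>i<5. Bs c (2 * i + 1)) 0"
    by (simp_all add: \<beta>_def \<gamma>_def fps_sum_nth)
  then have sums: "(\<Sum>i<5. \<beta> i) = 0" "(\<Sum>i<5. \<gamma> i) = 0"
    using assms(1,2) unfolding sum_Bs_pairs by simp_all
  \<comment> \<open>only the nondegeneracy hypotheses at i = 1 are needed\<close>
  have nonzero: "\<beta> 0 \<noteq> 0" "\<beta> 1 \<noteq> 0" "\<beta> 0 + \<beta> 1 \<noteq> 0"
      "\<gamma> 0 \<noteq> 0" "\<gamma> 1 \<noteq> 0" "\<gamma> 0 + \<gamma> 1 \<noteq> 0"
    using assms(3)[rule_format, of 1] assms(3)[rule_format, of 3]
    by (simp_all add: \<beta>_def \<gamma>_def nxt_def fps_X_dvd_iff eval_nat_numeral)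
  have "M_iso b c \<longleftrightarrow> pair_defects_solvable 5 \<beta> \<gamma>"
    unfolding \<beta>_def \<gamma>_def by (rule M_iso_iff_pair_defects_solvable[OF assms(1,2)])
  also have "\<dots> \<longleftrightarrow>
      \<gamma> 0 * \<beta> 1 * (\<gamma> 2 + \<gamma> 3) * \<beta> 4 - \<beta> 0 * \<gamma> 1 * (\<beta> 2 + \<beta> 3) * \<gamma> 4 = 0 \<and>
      \<gamma> 0 * \<beta> 1 * \<gamma> 2 * (\<beta> 3 + \<beta> 4) - \<beta> 0 * \<gamma> 1 * \<beta> 2 * (\<gamma> 3 + \<gamma> 4) = 0"
    by (rule five_pair_defects_solvable_iff[OF sums nonzero])
  finally show ?thesis
    by (simp add: \<beta>_def \<gamma>_def fps_X_dvd_iff)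
qed

end
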